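(* Let $\gamma\in\{\tfrac12,1,\dots\}$ and $j\in\{-\tfrac12,0,\tfrac12,\dots\}$ with $j\le\gamma-1$. Let $V_{j+1+\gamma}\subseteq F_\gamma\otimes D^+_j$ be the span of $|\gamma,\mu\rangle\otimes|j,j+1+\gamma-\mu\rangle$, $\mu\in\{-\gamma,\dots,\gamma\}$. Then the restriction of the Casimir $Q$ to $V_{j+1+\gamma}$ is not diagonalisable; consequently $Q$ is not diagonalisable on $F_\gamma\otimes D^+_j$.
   Context: Let $\mathfrak{spin}(2,1)_{\mathbb C}$ have basis $J_0,J_+,J_-$ with $[J_0,J_\pm]=\pm J_\pm$, $[J_+,J_-]=-2J_0$, and Casimir $Q=-J_0(J_0-1)+J_+J_-$. Set $\Gamma_\pm(j,m)=\mathrm i\sqrt{j\mp m}\,\sqrt{j\pm m+1}$. A module with basis $\{|j,m\rangle\}$ has action $J_0|j,m\rangle=m|j,m\rangle$, $J_\pm|j,m\rangle=\Gamma_\pm(j,m)|j,m\pm1\rangle$. The positive discrete series module $D^+_j$ has basis $|j,m\rangle$, $m\in\{j+1,j+2,\dots\}$; the finite-dimensional module $F_\gamma$ has basis $|\gamma,\mu\rangle$, $\mu\in\{-\gamma,\dots,\gamma\}$. On a tensor product the generators act as $J_0\otimes1+1\otimes J_0$, $J_\pm\otimes1+1\otimes J_\pm$. *)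

theory Defs
  imports Complex_Main
begin

text \<open>Vectors of F_gamma (x) D^+_j are represented as finitely supported functions
  from index pairs (mu, m) to complex coefficients; ket (mu,m) is |gamma,mu> (x) |j,m>.\<close>

definition Gp :: "real \<Rightarrow> real \<Rightarrow> complex" where
  "Gp j m = \<i> * csqrt (complex_of_real (j - m)) * csqrt (complex_of_real (j + m + 1))"

definition Gm :: "real \<Rightarrow> real \<Rightarrow> complex" where
  "Gm j m = \<i> * csqrt (complex_of_real (j + m)) * csqrt (complex_of_real (j - m + 1))"

definition ket :: "real \<times> real \<Rightarrow> (real \<times> real \<Rightarrow> complex)" where
  "ket b = (\<lambda>x. if x = b then 1 else 0)"

definition Fw :: "real \<Rightarrow> real set" where
  "Fw \<gamma> = {- \<gamma> + real k | k. real k \<le> 2 * \<gamma>}"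

definition Dw :: "real \<Rightarrow> real set" where
  "Dw j = {j + 1 + real k | k. True}"

definition J0b :: "real \<times> real \<Rightarrow> (real \<times> real \<Rightarrow> complex)" where
  "J0b b = (\<lambda>x. complex_of_real (fst b + snd b) * ket b x)"

definition Jpb :: "real \<Rightarrow> real \<Rightarrow> real \<times> real \<Rightarrow> (real \<times> real \<Rightarrow> complex)" where
  "Jpb \<gamma> j b = (\<lambda>x. Gp \<gamma> (fst b) * ket (fst b + 1, snd b) x
                     + Gp j (snd b) * ket (fst b, snd b + 1) x)"

definition Jmb :: "real \<Rightarrow> real \<Rightarrow> real \<times> real \<Rightarrow> (real \<times> real \<Rightarrow> complex)" where
  "Jmb \<gamma> j b = (\<lambda>x. Gm \<gamma> (fst b) * ket (fst b - 1, snd b) x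
                     + Gm j (snd b) * ket (fst b, snd b - 1) x)"

definition lin_ext :: "(real \<times> real \<Rightarrow> (real \<times> real \<Rightarrow> complex))
     \<Rightarrow> (real \<times> real \<Rightarrow> complex) \<Rightarrow> (real \<times> real \<Rightarrow> complex)" where
  "lin_ext T v = (\<lambda>x. \<Sum>b\<in>{b. v b \<noteq> 0}. v b * T b x)"

definition J0 :: "(real \<times> real \<Rightarrow> complex) \<Rightarrow> (real \<times> real \<Rightarrow> complex)" where
  "J0 = lin_ext J0b"

definition Jp :: "real \<Rightarrow> real \<Rightarrow> (real \<times> real \<Rightarrow> complex) \<Rightarrow> (real \<times> real \<Rightarrow> complex)" where
  "Jp \<gamma> j = lin_ext (Jpb \<gamma> j)"

definition Jm :: "real \<Rightarrow> real \<Rightarrow> (real \<times> real \<Rightarrow> complex) \<Rightarrow> (real \<times> real \<Rightarrow> complex)" where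
  "Jm \<gamma> j = lin_ext (Jmb \<gamma> j)"

definition Cas :: "real \<Rightarrow> real \<Rightarrow> (real \<times> real \<Rightarrow> complex) \<Rightarrow> (real \<times> real \<Rightarrow> complex)" where
  "Cas \<gamma> j v = (\<lambda>x. - (J0 (J0 v) x - J0 v x) + Jp \<gamma> j (Jm \<gamma> j v) x)"

definition TS :: "real \<Rightarrow> real \<Rightarrow> (real \<times> real \<Rightarrow> complex) set" where
  "TS \<gamma> j = {v. finite {b. v b \<noteq> 0} \<and> {b. v b \<noteq> 0} \<subseteq> Fw \<gamma> \<times> Dw j}"

definition fspan :: "(real \<times> real \<Rightarrow> complex) set \<Rightarrow> (real \<times> real \<Rightarrow> complex) set" where
  "fspan S = {v. \<exists>F c. finite F \<and> F \<subseteq> S \<and> v = (\<lambda>x. \<Sum>u\<in>F. c u * u x)}"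

definition Vsub :: "real \<Rightarrow> real \<Rightarrow> (real \<times> real \<Rightarrow> complex) set" where
  "Vsub \<gamma> j = fspan {ket (\<mu>, j + 1 + \<gamma> - \<mu>) | \<mu>. \<mu> \<in> Fw \<gamma>}"

definition eigvecs :: "((real \<times> real \<Rightarrow> complex) \<Rightarrow> (real \<times> real \<Rightarrow> complex))
     \<Rightarrow> (real \<times> real \<Rightarrow> complex) set \<Rightarrow> (real \<times> real \<Rightarrow> complex) set" where
  "eigvecs T W = {v \<in> W. v \<noteq> (\<lambda>x. 0) \<and> (\<exists>c. T v = (\<lambda>x. c * v x))}"

definition diagonalisable_on :: "(real \<times> real \<Rightarrow> complex) set
     \<Rightarrow> ((real \<times> real \<Rightarrow> complex) \<Rightarrow> (real \<times> real \<Rightarrow> complex)) \<Rightarrow> bool" where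
  "diagonalisable_on W T \<longleftrightarrow> W \<subseteq> fspan (eigvecs T W)"

end

theory Submission
  imports Defs
begin

text \<open>Let \<lambda> = \<gamma> - j. The vector u = |\<gamma>,-\<gamma>\<rangle> \<otimes> |j,j+1\<rangle> is killed by J_- and has weight 1 - \<lambda>,
  so Q u = c u with c = -\<lambda>(\<lambda>-1). The vector z = J_+^(2\<lambda>-2) u of weight \<lambda> - 1 is again a
  c-eigenvector, and since the system J_- y = z is triangular in the F-index, it has a solution y
  of weight \<lambda>. On weight \<lambda> the Casimir is c + J_+ J_-, hence (Q - c) y = J_+ z \<noteq> 0, while
  (Q - c)^2 y = J_+ (Q - c) z = 0 because Q commutes with J_+. As J_+ is injective on
  F_\<gamma> \<otimes> D^+_j, applying J_+^(2j+1) transports this Jordan chain into V_(j+1+\<gamma>), and a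
  vector with (Q - c)^2 x = 0 \<noteq> (Q - c) x never lies in a span of eigenvectors.\<close>

type_synonym vec = "real \<times> real \<Rightarrow> complex"

lemma Gm_eq_Gp: "Gm a m = Gp a (m - 1)"
proof -
  have "a - (m - 1) = a - m + 1" "a + (m - 1) + 1 = a + m" by simp_all
  then show ?thesis unfolding Gm_def Gp_def by (simp only:) (simp add: mult_ac)
qed

lemma Gp_eq_0_iff: "Gp a x = 0 \<longleftrightarrow> x = a \<or> x = - a - 1"
  unfolding Gp_def mult_eq_0_iff csqrt_eq_0 of_real_eq_0_iff by auto

lemma Gp_mult_self: "Gp a x * Gp a x = - complex_of_real ((a - x) * (a + x + 1))"
proof -
  have "Gp a x * Gp a x = (\<i> * \<i>) * (csqrt (complex_of_real (a - x)))\<^sup>2 * (csqrt (complex_of_real (a + x + 1)))\<^sup>2"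
    unfolding Gp_def power2_eq_square by (simp only: mult_ac)
  then show ?thesis by (simp add: algebra_simps)
qed

lemma Gp_mult_self_left: "Gp a x * (Gp a x * y) = - complex_of_real ((a - x) * (a + x + 1)) * y"
  by (simp add: Gp_mult_self mult.assoc[symmetric])

text \<open>J0, Jp, Jm and Cas are defined via lin_ext, which sums over the support and so is only
  meaningful on finitely supported vectors. Their pointwise formulas below agree with them there
  (Cas_eq_Cas_pw) and are linear on all functions, which keeps the algebra free of support bookkeeping.\<close>

definition J0_pw :: "vec \<Rightarrow> vec" where
  "J0_pw v = (\<lambda>x. complex_of_real (fst x + snd x) * v x)"

definition Jp_pw :: "real \<Rightarrow> real \<Rightarrow> vec \<Rightarrow> vec" where
  "Jp_pw g j v = (\<lambda>x. Gp g (fst x - 1) * v (fst x - 1, snd x) + Gp j (snd x - 1) * v (fst x, snd x - 1))"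

definition Jm_pw :: "real \<Rightarrow> real \<Rightarrow> vec \<Rightarrow> vec" where
  "Jm_pw g j v = (\<lambda>x. Gp g (fst x) * v (fst x + 1, snd x) + Gp j (snd x) * v (fst x, snd x + 1))"

definition Cas_pw :: "real \<Rightarrow> real \<Rightarrow> vec \<Rightarrow> vec" where
  "Cas_pw g j v = (\<lambda>x. - (J0_pw (J0_pw v) x - J0_pw v x) + Jp_pw g j (Jm_pw g j v) x)"

lemma Cas_pw_Jp_pw: "Cas_pw g j (Jp_pw g j v) = Jp_pw g j (Cas_pw g j v)"
  unfolding Cas_pw_def J0_pw_def Jp_pw_def Jm_pw_def
  by (rule ext) (simp add: algebra_simps Gp_mult_self Gp_mult_self_left)

definition finsupp :: "vec \<Rightarrow> bool" where
  "finsupp v \<longleftrightarrow> finite {b. v b \<noteq> 0}"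

lemma finsupp_lincomb:
  assumes "finsupp u" "finsupp v"
  shows "finsupp (\<lambda>x. f x * u x + h x * v x)"
proof -
  have "{x. f x * u x + h x * v x \<noteq> 0} \<subseteq> {x. u x \<noteq> 0} \<union> {x. v x \<noteq> 0}" by auto
  then show ?thesis using assms unfolding finsupp_def by (auto intro: finite_subset)
qed

lemma finsupp_translate: "finsupp v \<Longrightarrow> finsupp (\<lambda>x. v (fst x + s, snd x + t))"
proof -
  assume "finsupp v"
  moreover have "inj (\<lambda>x :: real \<times> real. (fst x + s, snd x + t))"
    by (auto intro: injI simp: prod_eq_iff)
  ultimately have "finite ((\<lambda>x. (fst x + s, snd x + t)) -` {b. v b \<noteq> 0})"
    unfolding finsupp_def by (rule finite_vimageI)
  then show ?thesis unfolding finsupp_def vimage_def by simp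
qed

lemma finsupp_J0_pw: "finsupp v \<Longrightarrow> finsupp (J0_pw v)"
  using finsupp_lincomb[of v v "\<lambda>x. complex_of_real (fst x + snd x)" "\<lambda>_. 0"]
  by (simp add: J0_pw_def)

lemma finsupp_Jp_pw: "finsupp v \<Longrightarrow> finsupp (Jp_pw g j v)"
  using finsupp_lincomb[OF finsupp_translate[of v "-1" 0] finsupp_translate[of v 0 "-1"]]
  by (simp add: Jp_pw_def)

lemma finsupp_Jm_pw: "finsupp v \<Longrightarrow> finsupp (Jm_pw g j v)"
  using finsupp_lincomb[OF finsupp_translate[of v 1 0] finsupp_translate[of v 0 1]]
  by (simp add: Jm_pw_def)

lemma sum_mult_ket:
  assumes "finite S" "\<And>b. b \<notin> S \<Longrightarrow> v b = 0" "\<And>b. s b = x \<longleftrightarrow> b = c"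
  shows "(\<Sum>b\<in>S. v b * f b * ket (s b) x) = v c * f c"
proof -
  have "(\<Sum>b\<in>S. v b * f b * ket (s b) x) = (\<Sum>b\<in>S. if b = c then v b * f b else 0)"
    by (rule sum.cong) (auto simp: ket_def assms(3)[symmetric])
  also have "\<dots> = v c * f c" using assms(1,2) by (simp add: sum.delta)
  finally show ?thesis .
qed

lemma J0_eq_J0_pw: "finsupp v \<Longrightarrow> J0 v = J0_pw v"
proof (rule ext)
  fix x assume "finsupp v"
  have "J0 v x = (\<Sum>b | v b \<noteq> 0. v b * complex_of_real (fst b + snd b) * ket b x)"
    unfolding J0_def lin_ext_def J0b_def by (simp add: mult_ac)
  also have "\<dots> = v x * complex_of_real (fst x + snd x)"
    using \<open>finsupp v\<close> by (intro sum_mult_ket[where s = id, simplified]) (auto simp: finsupp_def)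
  finally show "J0 v x = J0_pw v x" by (simp add: J0_pw_def mult_ac)
qed

lemma Jp_eq_Jp_pw: "finsupp v \<Longrightarrow> Jp g j v = Jp_pw g j v"
proof (rule ext)
  fix x assume "finsupp v"
  have "Jp g j v x = (\<Sum>b | v b \<noteq> 0. v b * Gp g (fst b) * ket (fst b + 1, snd b) x)
     + (\<Sum>b | v b \<noteq> 0. v b * Gp j (snd b) * ket (fst b, snd b + 1) x)"
    unfolding Jp_def lin_ext_def Jpb_def by (simp add: sum.distrib algebra_simps)
  also have "\<dots> = v (fst x - 1, snd x) * Gp g (fst x - 1) + v (fst x, snd x - 1) * Gp j (snd x - 1)"
    using \<open>finsupp v\<close>
    by (subst (1 2) sum_mult_ket[where c = "(fst x - 1, snd x)"] sum_mult_ket[where c = "(fst x, snd x - 1)"])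
      (auto simp: finsupp_def)
  finally show "Jp g j v x = Jp_pw g j v x" by (simp add: Jp_pw_def mult_ac)
qed

lemma Jm_eq_Jm_pw: "finsupp v \<Longrightarrow> Jm g j v = Jm_pw g j v"
proof (rule ext)
  fix x assume "finsupp v"
  have "Jm g j v x = (\<Sum>b | v b \<noteq> 0. v b * Gm g (fst b) * ket (fst b - 1, snd b) x)
     + (\<Sum>b | v b \<noteq> 0. v b * Gm j (snd b) * ket (fst b, snd b - 1) x)"
    unfolding Jm_def lin_ext_def Jmb_def by (simp add: sum.distrib algebra_simps)
  also have "\<dots> = v (fst x + 1, snd x) * Gm g (fst x + 1) + v (fst x, snd x + 1) * Gm j (snd x + 1)"
    using \<open>finsupp v\<close>
    by (subst (1 2) sum_mult_ket[where c = "(fst x + 1, snd x)"] sum_mult_ket[where c = "(fst x, snd x + 1)"])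
      (auto simp: finsupp_def)
  finally show "Jm g j v x = Jm_pw g j v x" by (simp add: Jm_pw_def Gm_eq_Gp mult_ac)
qed

lemma Cas_eq_Cas_pw: "finsupp v \<Longrightarrow> Cas g j v = Cas_pw g j v"
  by (simp add: Cas_def Cas_pw_def J0_eq_J0_pw Jm_eq_Jm_pw Jp_eq_Jp_pw finsupp_J0_pw finsupp_Jm_pw)

definition fun_linear :: "(('a \<Rightarrow> 'b::field) \<Rightarrow> 'a \<Rightarrow> 'b) \<Rightarrow> bool" where
  "fun_linear T \<longleftrightarrow> (\<forall>a b f h. T (\<lambda>x. a * f x + b * h x) = (\<lambda>x. a * T f x + b * T h x))"

definition eig_shift :: "(('a \<Rightarrow> 'b::field) \<Rightarrow> 'a \<Rightarrow> 'b) \<Rightarrow> 'b \<Rightarrow> ('a \<Rightarrow> 'b) \<Rightarrow> 'a \<Rightarrow> 'b" where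
  "eig_shift T c f = (\<lambda>x. T f x - c * f x)"

lemma fun_linearD: "fun_linear T \<Longrightarrow> T (\<lambda>x. a * f x + b * h x) = (\<lambda>x. a * T f x + b * T h x)"
  unfolding fun_linear_def by blast

lemma fun_linear_zero: "fun_linear T \<Longrightarrow> T (\<lambda>x. 0) = (\<lambda>x. 0)"
  using fun_linearD[of T 0 "\<lambda>x. 0" 0 "\<lambda>x. 0"] by simp

lemma fun_linear_sum:
  assumes "fun_linear T" "finite E"
  shows "T (\<lambda>x. \<Sum>u\<in>E. a u * u x) = (\<lambda>x. \<Sum>u\<in>E. a u * T u x)"
  using assms(2)
proof (induction E rule: finite_induct)
  case empty
  then show ?case using fun_linear_zero[OF assms(1)] by simp
next
  case (insert e E)
  then show ?case using fun_linearD[OF assms(1), of "a e" e 1] by simp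
qed

lemma fun_linear_eig_shift: "fun_linear T \<Longrightarrow> fun_linear (eig_shift T c)"
  unfolding fun_linear_def eig_shift_def by (simp add: fun_eq_iff algebra_simps)

lemma eig_shift_commute:
  assumes "fun_linear T"
  shows "eig_shift T c (eig_shift T k v) = eig_shift T k (eig_shift T c v)"
proof -
  have "T (eig_shift T k v) = (\<lambda>x. T (T v) x - k * T v x)" for k
    using fun_linearD[OF assms, of 1 "T v" "- k" v] by (simp add: eig_shift_def)
  then show ?thesis by (simp add: eig_shift_def fun_eq_iff algebra_simps)
qed

text \<open>Induction on the eigenvectors: an eigenvector of eigenvalue c drops out of (T - c) x; for one
  of eigenvalue k \<noteq> c, the induction hypothesis applied to (T - k) x shows that (T - c) x is killed
  by T - k as well as by T - c, hence vanishes.\<close>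
lemma eig_shift_square_zero_on_eigenspan:
  assumes lin: "fun_linear T" and "finite E" and ev: "\<And>e. e \<in> E \<Longrightarrow> T e = (\<lambda>x. ev e * e x)"
    and "eig_shift T c (eig_shift T c (\<lambda>x. \<Sum>u\<in>E. a u * u x)) = (\<lambda>x. 0)"
  shows "eig_shift T c (\<lambda>x. \<Sum>u\<in>E. a u * u x) = (\<lambda>x. 0)"
  using assms(2-4)
proof (induction E arbitrary: a rule: finite_induct)
  case empty
  then show ?case using fun_linear_zero[OF fun_linear_eig_shift[OF lin]] by simp
next
  case (insert e E)
  let ?comb = "\<lambda>E a x. \<Sum>u\<in>E. a u * u x"
  have IH: "eig_shift T c (eig_shift T c (?comb E a')) = (\<lambda>x. 0) \<Longrightarrow> eig_shift T c (?comb E a') = (\<lambda>x. 0)" for a'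
    using insert.IH[of a'] insert.prems(1) by simp
  have comb_insert: "?comb (insert e E) a = (\<lambda>x. a e * e x + 1 * ?comb E a x)"
    using insert.hyps by simp
  have shift_e: "eig_shift T k e = (\<lambda>x. (ev e - k) * e x)" for k
    using insert.prems(1) by (simp add: eig_shift_def fun_eq_iff algebra_simps)
  have shift_insert: "eig_shift T k (?comb (insert e E) a) = (\<lambda>x. (ev e - k) * a e * e x + eig_shift T k (?comb E a) x)" for k
    unfolding comb_insert fun_linearD[OF fun_linear_eig_shift[OF lin]] shift_e by (simp add: mult_ac)
  show ?case
  proof (cases "ev e = c")
    case True
    then have "eig_shift T c (?comb (insert e E) a) = eig_shift T c (?comb E a)"
      unfolding shift_insert by simp
    with insert.prems(2) IH show ?thesis by simp
  next
    case False
    let ?k = "ev e"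
    define a' where "a' u = a u * (ev u - ?k)" for u
    have shift_k: "eig_shift T ?k (?comb (insert e E) a) = ?comb E a'"
      unfolding shift_insert fun_linear_sum[OF fun_linear_eig_shift[OF lin] insert.hyps(1)]
      using insert.prems(1) by (simp add: a'_def eig_shift_def algebra_simps)
    have "eig_shift T c (eig_shift T c (?comb E a')) = (\<lambda>x. 0)"
      unfolding shift_k[symmetric] eig_shift_commute[OF lin, of c ?k] insert.prems(2)
      by (simp add: eig_shift_def fun_linear_zero[OF lin])
    then have "eig_shift T c (?comb E a') = (\<lambda>x. 0)" by (rule IH)
    define w where "w = eig_shift T c (?comb (insert e E) a)"
    have "eig_shift T ?k w = (\<lambda>x. 0)"
      unfolding w_def eig_shift_commute[OF lin, of ?k c] shift_k by fact
    moreover have "eig_shift T c w = (\<lambda>x. 0)" unfolding w_def by (fact insert.prems(2))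
    moreover have "(c - ?k) * w x = eig_shift T ?k w x - eig_shift T c w x" for x
      by (simp add: eig_shift_def algebra_simps)
    ultimately have "(c - ?k) * w x = 0" for x by simp
    with False show ?thesis unfolding w_def by (simp add: fun_eq_iff)
  qed
qed

lemma not_diagonalisable_on_if_Jordan_vector:
  assumes lin: "fun_linear T'" and agree: "\<And>w. w \<in> W \<Longrightarrow> T w = T' w" and "v \<in> W"
    and "eig_shift T' c v \<noteq> (\<lambda>x. 0)" and "eig_shift T' c (eig_shift T' c v) = (\<lambda>x. 0)"
  shows "\<not> diagonalisable_on W T"
proof
  assume "diagonalisable_on W T"
  then obtain E a where E: "finite E" "E \<subseteq> eigvecs T W" "v = (\<lambda>x. \<Sum>u\<in>E. a u * u x)"
    using \<open>v \<in> W\<close> unfolding diagonalisable_on_def fspan_def by blast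
  have "\<forall>e\<in>E. \<exists>k. T' e = (\<lambda>x. k * e x)"
    using E(2) agree unfolding eigvecs_def by fastforce
  then obtain ev where ev: "\<And>e. e \<in> E \<Longrightarrow> T' e = (\<lambda>x. ev e * e x)" by metis
  have "eig_shift T' c v = (\<lambda>x. 0)"
    unfolding E(3) by (rule eig_shift_square_zero_on_eigenspan[OF lin E(1) ev]) (use assms(5) E(3) in simp_all)
  with assms(4) show False ..
qed

lemma fun_linear_Jp_pw: "fun_linear (Jp_pw g j)"
  unfolding fun_linear_def Jp_pw_def by (simp add: fun_eq_iff algebra_simps)

lemma fun_linear_Cas_pw: "fun_linear (Cas_pw g j)"
  unfolding fun_linear_def Cas_pw_def J0_pw_def Jp_pw_def Jm_pw_def by (simp add: fun_eq_iff algebra_simps)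

lemma not_diagonalisable_Cas_if_Jordan_vector:
  assumes "\<And>w. w \<in> W \<Longrightarrow> finsupp w" "v \<in> W" "eig_shift (Cas_pw g j) c v \<noteq> (\<lambda>x. 0)"
    and "eig_shift (Cas_pw g j) c (eig_shift (Cas_pw g j) c v) = (\<lambda>x. 0)"
  shows "\<not> diagonalisable_on W (Cas g j)"
  using assms by (intro not_diagonalisable_on_if_Jordan_vector[OF fun_linear_Cas_pw])
    (auto simp: Cas_eq_Cas_pw)

lemma Jp_pw_power_zero: "(Jp_pw g j ^^ m) (\<lambda>x. 0) = (\<lambda>x. 0)"
  by (induction m) (simp_all add: fun_linear_zero[OF fun_linear_Jp_pw])

lemma eig_shift_Cas_pw_Jp_pw_power:
  "eig_shift (Cas_pw g j) c ((Jp_pw g j ^^ m) v) = (Jp_pw g j ^^ m) (eig_shift (Cas_pw g j) c v)"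
proof (induction m)
  case (Suc m)
  have "eig_shift (Cas_pw g j) c (Jp_pw g j u) = Jp_pw g j (eig_shift (Cas_pw g j) c u)" for u
    using fun_linearD[OF fun_linear_Jp_pw, where a = 1 and f = "Cas_pw g j u" and b = "- c" and h = u]
    by (simp add: eig_shift_def Cas_pw_Jp_pw)
  with Suc show ?case by simp
qed simp

definition of_weight :: "real \<Rightarrow> vec \<Rightarrow> bool" where
  "of_weight w v \<longleftrightarrow> (\<forall>x. v x \<noteq> 0 \<longrightarrow> fst x + snd x = w)"

lemma J0_pw_of_weight: "of_weight w v \<Longrightarrow> J0_pw v = (\<lambda>x. complex_of_real w * v x)"
  unfolding of_weight_def J0_pw_def by (metis mult_zero_right)

lemma Cas_pw_of_weight:
  assumes "of_weight w v"
  shows "Cas_pw g j v = (\<lambda>x. - complex_of_real (w\<^sup>2 - w) * v x + Jp_pw g j (Jm_pw g j v) x)"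
proof -
  have J0: "of_weight w (J0_pw v)"
    using assms by (simp add: of_weight_def J0_pw_def)
  have "J0_pw (J0_pw v) = (\<lambda>x. complex_of_real w * J0_pw v x)" by (rule J0_pw_of_weight[OF J0])
  also have "\<dots> = (\<lambda>x. complex_of_real w * (complex_of_real w * v x))"
    by (simp add: J0_pw_of_weight[OF assms])
  finally show ?thesis
    unfolding Cas_pw_def J0_pw_of_weight[OF assms]
    by (simp add: algebra_simps power2_eq_square)
qed

lemma of_weight_Jp_pw:
  assumes "of_weight w v"
  shows "of_weight (w + 1) (Jp_pw g j v)"
proof (unfold of_weight_def, intro allI impI)
  fix x assume "Jp_pw g j v x \<noteq> 0"
  then have "v (fst x - 1, snd x) \<noteq> 0 \<or> v (fst x, snd x - 1) \<noteq> 0" by (auto simp: Jp_pw_def)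
  with assms show "fst x + snd x = w + 1" unfolding of_weight_def by force
qed

lemma of_weight_Jp_pw_power: "of_weight w v \<Longrightarrow> of_weight (w + real m) ((Jp_pw g j ^^ m) v)"
proof (induction m)
  case (Suc m)
  then show ?case using of_weight_Jp_pw[of "w + real m"] by (simp add: add_ac)
qed simp

lemma TS_finsupp: "v \<in> TS g j \<Longrightarrow> finsupp v"
  by (simp add: TS_def finsupp_def)

lemma finsupp_ket: "finsupp (ket b)"
  unfolding finsupp_def ket_def by (rule finite_subset[of _ "{b}"]) auto

lemma fspan_finsupp:
  assumes "\<And>u. u \<in> B \<Longrightarrow> finsupp u" "v \<in> fspan B"
  shows "finsupp v"
proof -
  obtain F c where F: "finite F" "F \<subseteq> B" "v = (\<lambda>x. \<Sum>u\<in>F. c u * u x)"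
    using assms(2) unfolding fspan_def by blast
  have "{x. v x \<noteq> 0} \<subseteq> (\<Union>u\<in>F. {x. u x \<noteq> 0})"
  proof
    fix x assume "x \<in> {x. v x \<noteq> 0}"
    then obtain u where "u \<in> F" "c u * u x \<noteq> 0"
      unfolding F(3) by (auto elim: sum.not_neutral_contains_not_neutral)
    then show "x \<in> (\<Union>u\<in>F. {x. u x \<noteq> 0})" by auto
  qed
  moreover have "finite (\<Union>u\<in>F. {x. u x \<noteq> 0})"
    using F(1,2) assms(1) unfolding finsupp_def by blast
  ultimately show ?thesis unfolding finsupp_def by (rule finite_subset)
qed

lemma Vsub_finsupp: "v \<in> Vsub g j \<Longrightarrow> finsupp v"
  unfolding Vsub_def by (erule fspan_finsupp[rotated]) (auto simp: finsupp_ket)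

lemma lincomb_in_fspan:
  assumes "finite S" "inj_on f S" "f ` S \<subseteq> B"
  shows "(\<lambda>x. \<Sum>s\<in>S. c s * f s x) \<in> fspan B"
proof -
  have "(\<lambda>x. \<Sum>s\<in>S. c s * f s x) = (\<lambda>x. \<Sum>u\<in>f ` S. c (inv_into S f u) * u x)"
    using assms(2) by (simp add: sum.reindex)
  moreover have "finite (f ` S)" using assms(1) by simp
  ultimately show ?thesis unfolding fspan_def using assms(3) by auto
qed

lemma finsupp_ket_expansion:
  assumes "finsupp v"
  shows "v = (\<lambda>x. \<Sum>b | v b \<noteq> 0. v b * ket b x)"
proof
  fix x
  have "(\<Sum>b | v b \<noteq> 0. v b * ket b x) = (\<Sum>b | v b \<noteq> 0. if b = x then v b else 0)"
    by (rule sum.cong) (auto simp: ket_def)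
  also have "\<dots> = v x" using assms by (simp add: finsupp_def sum.delta')
  finally show "v x = (\<Sum>b | v b \<noteq> 0. v b * ket b x)" ..
qed

lemma TS_of_weight_in_Vsub:
  assumes "v \<in> TS g j" "of_weight (j + 1 + g) v"
  shows "v \<in> Vsub g j"
proof -
  let ?S = "{b. v b \<noteq> 0}"
  have "inj ket" by (rule injI) (metis ket_def zero_neq_one)
  moreover have "ket ` ?S \<subseteq> {ket (\<mu>, j + 1 + g - \<mu>) | \<mu>. \<mu> \<in> Fw g}"
  proof clarify
    fix b assume "v b \<noteq> 0"
    then have "fst b \<in> Fw g" "fst b + snd b = j + 1 + g"
      using assms unfolding TS_def of_weight_def by auto
    then have "fst b \<in> Fw g" "b = (fst b, j + 1 + g - fst b)" by (auto simp: prod_eq_iff)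
    then show "\<exists>\<mu>. ket b = ket (\<mu>, j + 1 + g - \<mu>) \<and> \<mu> \<in> Fw g" by metis
  qed
  moreover have "finite ?S" using assms(1) by (simp add: TS_def)
  ultimately have "(\<lambda>x. \<Sum>b\<in>?S. v b * ket b x) \<in> Vsub g j"
    unfolding Vsub_def by (intro lincomb_in_fspan) (auto intro: inj_on_subset)
  then show ?thesis using finsupp_ket_expansion[OF TS_finsupp[OF assms(1)]] by simp
qed

locale admissible_spins =
  fixes N :: nat and K :: int
  assumes K_ge: "K \<ge> -1" and K_le: "K \<le> int N - 2"
begin

abbreviation "\<gamma> \<equiv> real N / 2"
abbreviation "j \<equiv> real_of_int K / 2"

lemma Gp_j_nonzero: "q > j \<Longrightarrow> Gp j q \<noteq> 0"
  using K_ge by (simp add: Gp_eq_0_iff)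

lemma Jp_pw_TS:
  assumes v: "v \<in> TS \<gamma> j"
  shows "Jp_pw \<gamma> j v \<in> TS \<gamma> j"
proof -
  have "x \<in> Fw \<gamma> \<times> Dw j" if "Jp_pw \<gamma> j v x \<noteq> 0" for x
  proof -
    from that have "Gp \<gamma> (fst x - 1) * v (fst x - 1, snd x) \<noteq> 0 \<or> Gp j (snd x - 1) * v (fst x, snd x - 1) \<noteq> 0"
      by (auto simp: Jp_pw_def)
    then show ?thesis
    proof
      assume h: "Gp \<gamma> (fst x - 1) * v (fst x - 1, snd x) \<noteq> 0"
      then obtain k where k: "fst x - 1 = - \<gamma> + real k" "real k \<le> real N" "snd x \<in> Dw j"
        using v by (auto simp: TS_def Fw_def)
      with h have "real (k + 1) \<le> 2 * \<gamma>" by (auto simp: Gp_eq_0_iff)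
      moreover have "fst x = - \<gamma> + real (k + 1)" using k by simp
      ultimately have "fst x \<in> Fw \<gamma>" unfolding Fw_def by blast
      with k(3) show ?thesis by (simp add: mem_Times_iff)
    next
      assume "Gp j (snd x - 1) * v (fst x, snd x - 1) \<noteq> 0"
      then obtain l where l: "snd x - 1 = j + 1 + real l" "fst x \<in> Fw \<gamma>"
        using v by (auto simp: TS_def Dw_def)
      then have "snd x = j + 1 + real (l + 1)" by simp
      then have "snd x \<in> Dw j" unfolding Dw_def by blast
      with l(2) show ?thesis by (simp add: mem_Times_iff)
    qed
  qed
  then show ?thesis using finsupp_Jp_pw[OF TS_finsupp[OF v]] by (auto simp: TS_def finsupp_def)
qed

lemma Jp_pw_power_TS: "v \<in> TS \<gamma> j \<Longrightarrow> (Jp_pw \<gamma> j ^^ m) v \<in> TS \<gamma> j"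
  by (induction m) (simp_all add: Jp_pw_TS)

text \<open>At the largest D-weight occurring in v, only the D-part of J_+ contributes, and it does not vanish.\<close>
lemma Jp_pw_nonzero:
  assumes v: "v \<in> TS \<gamma> j" and nz: "v \<noteq> (\<lambda>x. 0)"
  shows "Jp_pw \<gamma> j v \<noteq> (\<lambda>x. 0)"
proof -
  let ?S = "{b. v b \<noteq> 0}"
  have fin: "finite ?S" and sub: "?S \<subseteq> Fw \<gamma> \<times> Dw j" using v by (auto simp: TS_def)
  have "?S \<noteq> {}" using nz by auto
  then have "Max (snd ` ?S) \<in> snd ` ?S" using fin by (intro Max_in) auto
  then obtain b where b: "b \<in> ?S" "snd b = Max (snd ` ?S)" by auto
  have top: "snd b' \<le> snd b" if "b' \<in> ?S" for b'
    unfolding b(2) using fin that by (intro Max_ge) auto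
  have "v (fst b - 1, snd b + 1) = 0" using top[of "(fst b - 1, snd b + 1)"] by force
  moreover have "Gp j (snd b) \<noteq> 0" using b(1) sub by (intro Gp_j_nonzero) (auto simp: Dw_def)
  ultimately have "Jp_pw \<gamma> j v (fst b, snd b + 1) \<noteq> 0" using b(1) by (simp add: Jp_pw_def)
  then show ?thesis by (auto simp: fun_eq_iff)
qed

lemma Jp_pw_power_nonzero: "v \<in> TS \<gamma> j \<Longrightarrow> v \<noteq> (\<lambda>x. 0) \<Longrightarrow> (Jp_pw \<gamma> j ^^ m) v \<noteq> (\<lambda>x. 0)"
  by (induction m) (simp_all add: Jp_pw_nonzero Jp_pw_power_TS)

definition lam :: real where "lam = \<gamma> - j"

definition r :: nat where "r = nat (int N - K - 1)"

lemma r_real: "real r = 2 * lam - 1" and r_ge_1: "r \<ge> 1" and r_le_N: "r \<le> N"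
  using K_ge K_le unfolding r_def lam_def by auto

definition weight_pair :: "real \<Rightarrow> nat \<Rightarrow> real \<times> real" where
  "weight_pair w i = (- \<gamma> + real i, w + \<gamma> - real i)"

lemma weight_pair_eq_iff: "weight_pair w i = weight_pair w' i' \<longleftrightarrow> w = w' \<and> i = i'"
  by (auto simp: weight_pair_def)

lemma weight_pair_lam_mem: "i \<le> r \<Longrightarrow> weight_pair lam i \<in> Fw \<gamma> \<times> Dw j"
proof -
  assume "i \<le> r"
  then have "real i \<le> 2 * \<gamma>" "lam + \<gamma> - real i = j + 1 + real (r - i)"
    using r_le_N r_real by (auto simp: lam_def)
  then show ?thesis unfolding weight_pair_def Fw_def Dw_def by auto
qed

definition lowest :: vec where "lowest = ket (- \<gamma>, j + 1)"

definition cas_ev :: complex where "cas_ev = - complex_of_real (lam\<^sup>2 - lam)"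

lemma lowest_TS: "lowest \<in> TS \<gamma> j"
proof -
  have "{b. lowest b \<noteq> 0} = {(- \<gamma>, j + 1)}" by (auto simp: lowest_def ket_def)
  moreover have "- \<gamma> \<in> Fw \<gamma>" "j + 1 \<in> Dw j" unfolding Fw_def Dw_def by force+
  ultimately show ?thesis unfolding TS_def by auto
qed

lemma lowest_nonzero: "lowest \<noteq> (\<lambda>x. 0)"
  unfolding lowest_def ket_def by (metis one_neq_zero)

lemma lowest_of_weight: "of_weight (1 - lam) lowest"
  unfolding of_weight_def lowest_def ket_def lam_def by auto

lemma Jm_pw_lowest: "Jm_pw \<gamma> j lowest = (\<lambda>x. 0)"
  unfolding Jm_pw_def lowest_def ket_def by (auto simp: fun_eq_iff Gp_eq_0_iff)

lemma eig_shift_lowest: "eig_shift (Cas_pw \<gamma> j) cas_ev lowest = (\<lambda>x. 0)"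
  unfolding eig_shift_def Cas_pw_of_weight[OF lowest_of_weight] Jm_pw_lowest
    fun_linear_zero[OF fun_linear_Jp_pw] cas_ev_def
  by (simp add: algebra_simps power2_eq_square)

definition z :: vec where "z = (Jp_pw \<gamma> j ^^ (r - 1)) lowest"

lemma z_TS: "z \<in> TS \<gamma> j"
  unfolding z_def by (rule Jp_pw_power_TS[OF lowest_TS])

lemma z_nonzero: "z \<noteq> (\<lambda>x. 0)"
  unfolding z_def by (rule Jp_pw_power_nonzero[OF lowest_TS lowest_nonzero])

lemma z_of_weight: "of_weight (lam - 1) z"
proof -
  have "1 - lam + real (r - 1) = lam - 1" using r_ge_1 r_real by simp
  moreover have "of_weight (1 - lam + real (r - 1)) z"
    unfolding z_def by (rule of_weight_Jp_pw_power[OF lowest_of_weight])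
  ultimately show ?thesis by (simp only:)
qed

lemma eig_shift_z: "eig_shift (Cas_pw \<gamma> j) cas_ev z = (\<lambda>x. 0)"
  unfolding z_def eig_shift_Cas_pw_Jp_pw_power eig_shift_lowest by (rule Jp_pw_power_zero)

lemma z_support: "z x \<noteq> 0 \<Longrightarrow> \<exists>i<r. x = weight_pair (lam - 1) i"
proof -
  assume "z x \<noteq> 0"
  then have "x \<in> Fw \<gamma> \<times> Dw j" "fst x + snd x = lam - 1"
    using z_TS z_of_weight unfolding TS_def of_weight_def by auto
  then obtain k l where
    kl: "fst x = - \<gamma> + real k" "snd x = j + 1 + real l" "fst x + snd x = lam - 1"
    unfolding Fw_def Dw_def by (auto simp: mem_Times_iff)
  then have "real (k + l + 1) = real r" using r_real by (simp add: lam_def)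
  then have "k < r" by linarith
  moreover have "x = weight_pair (lam - 1) k" using kl by (simp add: weight_pair_def prod_eq_iff)
  ultimately show ?thesis by blast
qed

text \<open>Coordinates of a solution of J_- y = z: the entry of J_- y at weight_pair (lam - 1) i involves
  only the coefficients of y at weight_pair lam i and weight_pair lam (Suc i), so the system is
  solved upwards from i = 0.\<close>
primrec ycoeff :: "nat \<Rightarrow> complex" where
  "ycoeff 0 = 0"
| "ycoeff (Suc i) = (z (weight_pair (lam - 1) i) - Gp j (snd (weight_pair (lam - 1) i)) * ycoeff i)
      / Gp \<gamma> (fst (weight_pair (lam - 1) i))"

definition y :: vec where "y = (\<lambda>x. \<Sum>i\<le>r. ycoeff i * ket (weight_pair lam i) x)"

lemma y_weight_pair: "i \<le> r \<Longrightarrow> y (weight_pair lam i) = ycoeff i"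
proof -
  assume "i \<le> r"
  have "y (weight_pair lam i) = (\<Sum>i'\<le>r. if i' = i then ycoeff i' else 0)"
    unfolding y_def by (rule sum.cong) (auto simp: ket_def weight_pair_eq_iff)
  with \<open>i \<le> r\<close> show ?thesis by simp
qed

lemma y_outside: "(\<And>i. i \<le> r \<Longrightarrow> x \<noteq> weight_pair lam i) \<Longrightarrow> y x = 0"
  unfolding y_def ket_def by simp

lemma y_support: "y x \<noteq> 0 \<Longrightarrow> x \<in> weight_pair lam ` {..r}"
  using y_outside by blast

lemma y_TS: "y \<in> TS \<gamma> j"
proof -
  have supp: "{b. y b \<noteq> 0} \<subseteq> weight_pair lam ` {..r}" using y_support by blast
  then have "finite {b. y b \<noteq> 0}" by (rule finite_subset) simp
  moreover have "weight_pair lam ` {..r} \<subseteq> Fw \<gamma> \<times> Dw j" using weight_pair_lam_mem by blast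
  ultimately show ?thesis using supp unfolding TS_def by blast
qed

lemma y_of_weight: "of_weight lam y"
proof (unfold of_weight_def, intro allI impI)
  fix x assume "y x \<noteq> 0"
  then obtain i where "x = weight_pair lam i" using y_support by blast
  then show "fst x + snd x = lam" by (simp add: weight_pair_def)
qed

lemma y_off_chain:
  assumes "\<And>i. i \<le> r \<Longrightarrow> (p, q) \<noteq> weight_pair (lam - 1) i"
  shows "y (p + 1, q) = 0" and "y (p, q + 1) = 0"
proof -
  show "y (p, q + 1) = 0"
    using assms by (intro y_outside) (fastforce simp: weight_pair_def)
  show "y (p + 1, q) = 0"
  proof (cases "\<exists>i\<le>r. (p + 1, q) = weight_pair lam i")
    case True
    then obtain i where i: "i \<le> r" "(p + 1, q) = weight_pair lam i" by blast
    show ?thesis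
    proof (cases i)
      case 0
      with i show ?thesis by (simp add: y_weight_pair)
    next
      case (Suc i')
      with i have "(p, q) = weight_pair (lam - 1) i'" "i' \<le> r" by (auto simp: weight_pair_def)
      with assms show ?thesis by blast
    qed
  qed (auto intro: y_outside)
qed

lemma Jm_pw_y: "Jm_pw \<gamma> j y = z"
proof
  fix x :: "real \<times> real"
  obtain p q where x: "x = (p, q)" by fastforce
  have Jm: "Jm_pw \<gamma> j y (p, q) = Gp \<gamma> p * y (p + 1, q) + Gp j q * y (p, q + 1)"
    by (simp add: Jm_pw_def)
  consider (inner) i where "i < r" "(p, q) = weight_pair (lam - 1) i"
    | (last) "(p, q) = weight_pair (lam - 1) r"
    | (outside) "\<And>i. i \<le> r \<Longrightarrow> (p, q) \<noteq> weight_pair (lam - 1) i"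
    using le_neq_implies_less by blast
  then show "Jm_pw \<gamma> j y x = z x"
  proof cases
    case inner
    then have "(p + 1, q) = weight_pair lam (Suc i)" "(p, q + 1) = weight_pair lam i" by (auto simp: weight_pair_def)
    with inner have "y (p + 1, q) = ycoeff (Suc i)" "y (p, q + 1) = ycoeff i"
      by (simp_all add: y_weight_pair del: ycoeff.simps)
    moreover have "Gp \<gamma> p \<noteq> 0"
      using inner r_le_N by (auto simp: weight_pair_def Gp_eq_0_iff)
    moreover have "ycoeff (Suc i) = (z (p, q) - Gp j q * ycoeff i) / Gp \<gamma> p"
      by (simp add: inner(2)[symmetric])
    ultimately show ?thesis unfolding x Jm by (simp add: field_simps del: ycoeff.simps)
  next
    case last
    then have "q = j" using r_real by (simp add: weight_pair_def lam_def)
    moreover have "(p + 1, q) = weight_pair lam (Suc r)" using last by (auto simp: weight_pair_def)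
    then have "y (p + 1, q) = 0" by (auto intro!: y_outside simp: weight_pair_eq_iff)
    moreover have "z (p, q) = 0" using last z_support[of "(p, q)"] by (auto simp: weight_pair_eq_iff)
    ultimately show ?thesis unfolding x Jm by (simp add: Gp_eq_0_iff)
  next
    case outside
    then have "y (p + 1, q) = 0" "y (p, q + 1) = 0" by (fact y_off_chain(1), fact y_off_chain(2))
    moreover have "z (p, q) = 0" using outside z_support[of "(p, q)"] less_imp_le by blast
    ultimately show ?thesis unfolding x Jm by simp
  qed
qed

lemma eig_shift_y: "eig_shift (Cas_pw \<gamma> j) cas_ev y = Jp_pw \<gamma> j z"
  unfolding eig_shift_def Cas_pw_of_weight[OF y_of_weight] Jm_pw_y cas_ev_def by simp

definition jordan_vec :: vec where "jordan_vec = (Jp_pw \<gamma> j ^^ nat (K + 1)) y"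

lemma jordan_vec_TS: "jordan_vec \<in> TS \<gamma> j"
  unfolding jordan_vec_def by (rule Jp_pw_power_TS[OF y_TS])

lemma jordan_vec_Vsub: "jordan_vec \<in> Vsub \<gamma> j"
proof (rule TS_of_weight_in_Vsub[OF jordan_vec_TS])
  have "lam + real (nat (K + 1)) = j + 1 + \<gamma>" using K_ge by (simp add: lam_def)
  moreover have "of_weight (lam + real (nat (K + 1))) jordan_vec"
    unfolding jordan_vec_def by (rule of_weight_Jp_pw_power[OF y_of_weight])
  ultimately show "of_weight (j + 1 + \<gamma>) jordan_vec" by (simp only:)
qed

lemma eig_shift_jordan_vec: "eig_shift (Cas_pw \<gamma> j) cas_ev jordan_vec \<noteq> (\<lambda>x. 0)"
  unfolding jordan_vec_def eig_shift_Cas_pw_Jp_pw_power eig_shift_y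
  by (intro Jp_pw_power_nonzero Jp_pw_TS Jp_pw_nonzero z_TS z_nonzero)

lemma eig_shift_twice_jordan_vec:
  "eig_shift (Cas_pw \<gamma> j) cas_ev (eig_shift (Cas_pw \<gamma> j) cas_ev jordan_vec) = (\<lambda>x. 0)"
  unfolding jordan_vec_def eig_shift_Cas_pw_Jp_pw_power eig_shift_y
    eig_shift_Cas_pw_Jp_pw_power[where m = 1, simplified] eig_shift_z
  by (simp add: fun_linear_zero[OF fun_linear_Jp_pw] Jp_pw_power_zero)

end

theorem mainTheorem6:
  fixes \<gamma> j :: real
  assumes "\<exists>n::nat. n \<ge> 1 \<and> \<gamma> = real n / 2"
    and "\<exists>k::int. k \<ge> -1 \<and> j = real_of_int k / 2"
    and "j \<le> \<gamma> - 1"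
  shows "\<not> diagonalisable_on (Vsub \<gamma> j) (Cas \<gamma> j) \<and> \<not> diagonalisable_on (TS \<gamma> j) (Cas \<gamma> j)"
proof -
  obtain N :: nat where N: "\<gamma> = real N / 2" using assms(1) by blast
  obtain K :: int where K: "K \<ge> -1" "j = real_of_int K / 2" using assms(2) by blast
  have "K \<le> int N - 2" using assms(3) N K by linarith
  then interpret admissible_spins N K using K(1) by unfold_locales
  note Jordan = not_diagonalisable_Cas_if_Jordan_vector[OF _ _
      eig_shift_jordan_vec eig_shift_twice_jordan_vec]
  show ?thesis unfolding N K(2)
    by (intro conjI Jordan jordan_vec_Vsub jordan_vec_TS) (auto intro: Vsub_finsupp TS_finsupp)
qed

end
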